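(* Let $k\ge 1$ and let $P(n)=\sum_{i=0}^k\alpha_i n^i$ be a polynomial of degree $k$ with real coefficients. Let $q,R,h$ be positive integers and $p$ an integer such that \[\gcd(p,q)=1,\qquad \Bigl|\alpha_k-\frac pq\Bigr|\le\frac1{q^2},\qquad 2h\,k!\,R^{2-1/2^{k-2}}\le q.\] Then for every integer $N\ge R$, \[\frac1N\Bigl|\sum_{1\le n\le N}e(hP(n))\Bigr|\le C_k\Bigl(\frac1R+\frac qN\Bigr)^{1/2^{k-1}},\] where $C_k$ is a constant depending only on $k$.
   Context: $e(u)=\exp(2\pi i u)$ for real $u$. *)

theory Defs
  imports "HOL-Analysis.Analysis" "HOL-Computational_Algebra.Polynomial"
begin

definition e :: "real \<Rightarrow> complex" where
  "e u = exp (2 * complex_of_real pi * \<i> * complex_of_real u)"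

end

(*
  Weyl differencing with shift lengths adapted to the degree.  By van der Corput's
  inequality, the exponential sum of a polynomial P of degree j with leading
  coefficient beta is bounded, up to 2H/N and 1/H, by the sums of the differences
  P(t + a) - P(t + b) with a, b < H, which have degree j - 1 and leading coefficient
  j beta (a - b).  Taking H = R^(1/2^(j-2)) at degree j and descending to degree 1
  leaves linear sums with slopes m h alpha_k, 0 < |m| <= k! R^(2 - 1/2^(k-2)).  The
  hypothesis on q gives 2 |m h| <= q, so by coprimality m h alpha_k is at distance at
  least 1/(2q) from the integers and every linear sum is at most 2q.  Each
  differencing step takes a square root, which turns the bound x = 1/R + q/N for the
  linear sums into x^(1/2^(k-1)).
*)

theory Submission
  imports Defs
begin

lemma e_cis: "e u = cis (2 * pi * u)"
  unfolding e_def cis_conv_exp by (simp add: mult.commute mult.left_commute)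

lemma e_add: "e (u + v) = e u * e v"
  by (simp add: e_cis cis_mult distrib_left)

lemma norm_e [simp]: "norm (e u) = 1"
  by (simp add: e_cis)

lemma e_mult_cnj: "e u * cnj (e v) = e (u - v)"
  by (simp add: e_cis cis_cnj cis_mult right_diff_distrib)

lemma e_of_int [simp]: "e (of_int m) = 1"
  by (simp add: e_cis)

lemma e_power: "e u ^ n = e (real n * u)"
  by (simp only: e_cis Complex.DeMoivre) (simp add: ac_simps)

lemma norm_one_minus_e: "norm (1 - e r) = 2 * \<bar>sin (pi * r)\<bar>"
proof -
  have "e r = exp (\<i> * complex_of_real (2 * pi * r))"
    unfolding e_def by (simp add: ac_simps)
  then show ?thesis
    using dist_exp_i_1[of "2 * pi * r"] by (simp add: norm_minus_commute)
qed

definition exp_sum :: "(real \<Rightarrow> real) \<Rightarrow> nat \<Rightarrow> complex" where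
  "exp_sum f N = (\<Sum>n=1..N. e (f (real n)))"

lemma norm_exp_sum_le: "norm (exp_sum f N) \<le> N"
  unfolding exp_sum_def using norm_sum[of "\<lambda>n. e (f (real n))" "{1..N}"] by simp

lemma norm_sum_shift_le:
  fixes z :: "nat \<Rightarrow> 'a::real_normed_vector"
  assumes z: "\<And>n. norm (z n) \<le> 1"
  shows "norm ((\<Sum>n=1..N. z n) - (\<Sum>n=1..N. z (n + a))) \<le> 2 * real a"
proof (induction a)
  case (Suc a)
  let ?S = "\<lambda>a. \<Sum>n=1..N. z (n + a)"
  have "?S (Suc a) - ?S a = z (Suc N + a) - z (1 + a)"
    using sum_Suc_diff[of 1 N "\<lambda>n. z (n + a)"] by (simp add: sum_subtractf)
  moreover have "norm (z (Suc N + a) - z (1 + a)) \<le> 2"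
    using norm_triangle_ineq4[of "z (Suc N + a)" "z (1 + a)"] z[of "Suc N + a"] z[of "1 + a"] by simp
  moreover have "norm (?S 0 - ?S (Suc a)) \<le> norm (?S 0 - ?S a) + norm (?S (Suc a) - ?S a)"
    using norm_triangle_ineq4[of "?S 0 - ?S a" "?S (Suc a) - ?S a"] by simp
  ultimately show ?case using Suc.IH by simp
qed simp

lemma van_der_corput:
  fixes z :: "nat \<Rightarrow> complex" and H N :: nat
  assumes z: "\<And>n. norm (z n) \<le> 1"
  defines "V \<equiv> (\<Sum>a<H. \<Sum>b<H. norm (\<Sum>n=1..N. z (n + a) * cnj (z (n + b))))"
  shows "real H * norm (\<Sum>n=1..N. z n) \<le> 2 * real H ^ 2 + sqrt (real N * V)"
proof -
  define S where "S = (\<Sum>n=1..N. z n)"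
  define w where "w n = (\<Sum>a<H. z (n + a))" for n
  have "norm (of_nat H * S - (\<Sum>n=1..N. w n)) = norm (\<Sum>a<H. S - (\<Sum>n=1..N. z (n + a)))"
    unfolding w_def by (subst sum.swap) (simp add: sum_subtractf)
  also have "\<dots> \<le> (\<Sum>a<H. norm (S - (\<Sum>n=1..N. z (n + a))))"
    by (rule norm_sum)
  also have "\<dots> \<le> (\<Sum>a<H. 2 * real H)"
  proof (rule sum_mono)
    fix a assume "a \<in> {..<H}"
    then show "norm (S - (\<Sum>n=1..N. z (n + a))) \<le> 2 * real H"
      using norm_sum_shift_le[of z N a] z unfolding S_def by simp
  qed
  also have "\<dots> = 2 * real H ^ 2"
    by (simp add: power2_eq_square)
  finally have shifts: "norm (of_nat H * S - (\<Sum>n=1..N. w n)) \<le> 2 * real H ^ 2" .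
  have "(norm (w n))\<^sup>2 = Re (\<Sum>a<H. \<Sum>b<H. z (n + a) * cnj (z (n + b)))" for n
  proof -
    have "w n * cnj (w n) = (\<Sum>a<H. \<Sum>b<H. z (n + a) * cnj (z (n + b)))"
      unfolding w_def cnj_sum by (rule sum_product)
    then show ?thesis by (metis Re_complex_of_real complex_norm_square)
  qed
  then have "(\<Sum>n=1..N. (norm (w n))\<^sup>2) = Re (\<Sum>n=1..N. \<Sum>a<H. \<Sum>b<H. z (n + a) * cnj (z (n + b)))"
    by (simp only: Re_sum)
  also have "\<dots> = Re (\<Sum>a<H. \<Sum>b<H. \<Sum>n=1..N. z (n + a) * cnj (z (n + b)))"
    by (subst sum.swap, subst sum.swap, rule refl)
  also have "\<dots> \<le> V"
    unfolding V_def Re_sum[of _ "{..<H}"] by (intro sum_mono complex_Re_le_cmod)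
  finally have "(\<Sum>n=1..N. norm (w n))\<^sup>2 \<le> V * real N"
    using sum_squared_le_sum_of_squares[of "\<lambda>n. norm (w n)" "{1..N}"]
    by (metis card_atLeastAtMost diff_Suc_1 mult_right_mono of_nat_0_le_iff order_trans)
  then have "norm (\<Sum>n=1..N. w n) \<le> sqrt (real N * V)"
    by (intro order_trans[OF norm_sum]) (simp add: real_le_rsqrt mult.commute)
  then show ?thesis
    using shifts norm_triangle_ineq2[of "of_nat H * S" "\<Sum>n=1..N. w n"] unfolding S_def
    by (simp add: norm_mult)
qed

lemma weyl_differencing:
  fixes f :: "real \<Rightarrow> real" and H N :: nat and B :: real
  assumes H: "1 \<le> H" and B: "0 \<le> B"
    and diff: "\<And>a b. a < H \<Longrightarrow> b < H \<Longrightarrow> a \<noteq> b \<Longrightarrow>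
      norm (exp_sum (\<lambda>t. f (t + real a) - f (t + real b)) N) \<le> B * N"
  shows "norm (exp_sum f N) \<le> 2 * real H + sqrt (1 / H + B) * N"
proof -
  define U where "U a b = norm (\<Sum>n=1..N. e (f (real (n + a))) * cnj (e (f (real (n + b)))))" for a b
  have "U a b \<le> (if a = b then real N else 0) + B * N" if "a < H" "b < H" for a b
  proof -
    have U: "U a b = norm (exp_sum (\<lambda>t. f (t + real a) - f (t + real b)) N)"
      by (simp add: U_def exp_sum_def e_mult_cnj)
    show ?thesis
    proof (cases "a = b")
      case True
      have "0 \<le> B * N" using B by simp
      then show ?thesis using U norm_exp_sum_le[of _ N] True by (simp add: add_increasing2)
    qed (use U diff[OF that] in simp)
  qed
  then have "(\<Sum>a<H. \<Sum>b<H. U a b) \<le> (\<Sum>a<H. \<Sum>b<H. (if a = b then real N else 0) + B * N)"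
    by (intro sum_mono) auto
  also have "\<dots> = H * N + H ^ 2 * B * N"
    by (simp add: sum.distrib power2_eq_square algebra_simps)
  finally have "N * (\<Sum>a<H. \<Sum>b<H. U a b) \<le> N * (H * N + H ^ 2 * B * N)"
    by (rule mult_left_mono) simp
  also have "\<dots> = (H * N) ^ 2 * (1 / H + B)"
    using H by (simp add: power2_eq_square field_simps)
  finally have "sqrt (N * (\<Sum>a<H. \<Sum>b<H. U a b)) \<le> sqrt ((H * N) ^ 2 * (1 / H + B))"
    by (rule real_sqrt_le_mono)
  also have "\<dots> = H * N * sqrt (1 / H + B)"
    by (simp add: real_sqrt_mult)
  finally have "H * norm (exp_sum f N) \<le> H * (2 * H + sqrt (1 / H + B) * N)"
    using van_der_corput[of "\<lambda>n. e (f (real n))" H N] unfolding exp_sum_def U_def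
    by (simp add: power2_eq_square algebra_simps)
  then show ?thesis using H by simp
qed

lemma abs_le_abs_sin_pi:
  assumes r: "\<bar>r\<bar> \<le> 1 / 2"
  shows "\<bar>r\<bar> \<le> \<bar>sin (pi * r)\<bar>"
proof -
  define y where "y = pi * \<bar>r\<bar>"
  have y: "0 \<le> y" "y \<le> 2"
    using r pi_less_4 mult_mono[of pi 4 "\<bar>r\<bar>" "1 / 2"] by (auto simp: y_def)
  have "\<bar>sin y - y\<bar> \<le> y ^ 3 / 6"
    using Maclaurin_sin_bound[of y 3] y by (simp add: numeral_3_eq_3 sin_coeff_def fact_numeral)
  moreover have "y ^ 3 \<le> 4 * y"
    using y mult_mono[of y 2 y 2] mult_left_mono[of "y\<^sup>2" 4 y] by (simp add: power3_eq_cube power2_eq_square)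
  ultimately have "y / 3 \<le> sin y" by linarith
  moreover have "\<bar>r\<bar> \<le> y / 3" using mult_right_mono[of 3 pi "\<bar>r\<bar>"] pi_gt3 by (simp add: y_def)
  moreover have "\<bar>sin (pi * r)\<bar> = sin y"
    using sin_ge_zero[of y] y r pi_gt3 by (cases "r \<ge> 0") (simp_all add: y_def)
  ultimately show ?thesis by linarith
qed

lemma norm_exp_sum_linear_le:
  assumes "g \<noteq> of_int (round g)"
  shows "norm (exp_sum (\<lambda>t. g * t + c) N) \<le> 1 / \<bar>g - of_int (round g)\<bar>"
proof -
  define r where "r = g - of_int (round g)"
  have r: "0 < \<bar>r\<bar>" "\<bar>r\<bar> \<le> 1 / 2"
    using assms of_int_round_abs_le[of g] by (auto simp: r_def abs_minus_commute)
  define w where "w = e g"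
  have w: "w = e r"
    unfolding w_def r_def using e_add[of "g - of_int (round g)" "of_int (round g)"] by simp
  have "exp_sum (\<lambda>t. g * t + c) N = e c * (\<Sum>n=1..N. w ^ n)"
    unfolding exp_sum_def w_def e_power sum_distrib_left
    by (rule sum.cong) (simp_all add: e_add mult.commute)
  then have sum_eq: "norm (exp_sum (\<lambda>t. g * t + c) N) = norm (\<Sum>n=1..N. w ^ n)"
    by (simp add: norm_mult)
  have "(1 - w) * (\<Sum>n=1..N. w ^ n) = w - w ^ Suc N"
    by (cases "N = 0") (simp_all add: sum_gp_multiplied)
  moreover have "norm (w - w ^ Suc N) \<le> 2"
    using norm_triangle_ineq4[of w "w ^ Suc N"] by (simp add: w norm_power norm_mult)
  ultimately have "norm (1 - w) * norm (\<Sum>n=1..N. w ^ n) \<le> 2"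
    by (simp flip: norm_mult)
  moreover have "2 * \<bar>r\<bar> \<le> norm (1 - w)"
    unfolding w norm_one_minus_e using abs_le_abs_sin_pi[OF r(2)] by simp
  ultimately have "2 * \<bar>r\<bar> * norm (\<Sum>n=1..N. w ^ n) \<le> 2"
    by (meson mult_right_mono norm_ge_zero order_trans)
  then show ?thesis
    using r(1) unfolding sum_eq r_def by (simp add: field_simps)
qed

lemma dist_round_mult_ge:
  fixes p q m :: int and \<alpha> :: real
  assumes q: "q > 0" and "coprime p q"
    and approx: "\<bar>\<alpha> - real_of_int p / real_of_int q\<bar> \<le> 1 / (real_of_int q)\<^sup>2"
    and "m \<noteq> 0" and mq: "2 * \<bar>m\<bar> \<le> q"
  shows "1 / (2 * real_of_int q) \<le> \<bar>real_of_int m * \<alpha> - real_of_int (round (m * \<alpha>))\<bar>"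
proof -
  define t where "t = round (m * \<alpha>)"
  have "\<not> q dvd m"
    using \<open>m \<noteq> 0\<close> mq dvd_imp_le_int[of m q] by auto
  then have "\<not> q dvd m * p"
    using \<open>coprime p q\<close> by (simp add: coprime_commute coprime_dvd_mult_left_iff)
  then have "m * p - t * q \<noteq> 0"
    by (metis dvd_triv_right eq_iff_diff_eq_0 mult.commute)
  then have "1 / q \<le> \<bar>(m * p - t * q) / q\<bar>"
    using q by (simp add: divide_right_mono del: of_int_diff)
  also have "(m * p - t * q) / q = (m * \<alpha> - t) - m * (\<alpha> - p / q)"
    using q by (simp add: field_simps)
  also have "\<bar>(m * \<alpha> - t) - m * (\<alpha> - p / q)\<bar> \<le> \<bar>m * \<alpha> - t\<bar> + \<bar>m\<bar> * \<bar>\<alpha> - p / q\<bar>"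
    using abs_triangle_ineq4[of "m * \<alpha> - t" "m * (\<alpha> - p / q)"] by (simp add: abs_mult)
  also have "\<bar>m\<bar> * \<bar>\<alpha> - p / q\<bar> \<le> (q / 2) * (1 / q ^ 2)"
    using mq approx by (intro mult_mono) auto
  finally show ?thesis
    using q unfolding t_def by (simp add: power2_eq_square field_simps)
qed

definition linear_exp_sums_le :: "nat \<Rightarrow> real \<Rightarrow> real \<Rightarrow> real \<Rightarrow> bool" where
  "linear_exp_sums_le N Q \<beta> M \<longleftrightarrow>
    (\<forall>m::int. m \<noteq> 0 \<and> \<bar>real_of_int m\<bar> \<le> M \<longrightarrow>
      (\<forall>c. norm (exp_sum (\<lambda>t. real_of_int m * \<beta> * t + c) N) \<le> Q))"

lemma linear_exp_sums_le_scale: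
  fixes c :: int and \<beta> M M' :: real
  assumes sums: "linear_exp_sums_le N Q \<beta> M" and "c \<noteq> 0" and "\<bar>real_of_int c\<bar> * M' \<le> M"
  shows "linear_exp_sums_le N Q (c * \<beta>) M'"
  unfolding linear_exp_sums_le_def
proof (intro allI impI)
  fix m :: int and c'
  assume m: "m \<noteq> 0 \<and> \<bar>real_of_int m\<bar> \<le> M'"
  have "\<bar>real_of_int (m * c)\<bar> \<le> M"
    using m assms(3) mult_left_mono[of "\<bar>m\<bar>" M' "\<bar>c\<bar>"] by (simp add: abs_mult mult.commute)
  moreover have "m * c \<noteq> 0" using m \<open>c \<noteq> 0\<close> by simp
  ultimately have "norm (exp_sum (\<lambda>t. of_int (m * c) * \<beta> * t + c') N) \<le> Q"
    using sums unfolding linear_exp_sums_le_def by blast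
  then show "norm (exp_sum (\<lambda>t. real_of_int m * (real_of_int c * \<beta>) * t + c') N) \<le> Q"
    by (simp add: mult.assoc)
qed

lemma linear_exp_sums_le_approx:
  fixes p q h :: int and \<alpha> M :: real
  assumes q: "q > 0" and "coprime p q"
    and "\<bar>\<alpha> - real_of_int p / real_of_int q\<bar> \<le> 1 / (real_of_int q)\<^sup>2"
    and "h \<noteq> 0" and hM: "2 * \<bar>real_of_int h\<bar> * M \<le> real_of_int q"
  shows "linear_exp_sums_le N (2 * real_of_int q) (real_of_int h * \<alpha>) M"
  unfolding linear_exp_sums_le_def
proof (intro allI impI)
  fix m :: int and c
  assume m: "m \<noteq> 0 \<and> \<bar>real_of_int m\<bar> \<le> M"
  define g where "g = real_of_int (m * h) * \<alpha>"
  have "real_of_int (2 * \<bar>m * h\<bar>) \<le> real_of_int q"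
    using m hM mult_left_mono[of "\<bar>m\<bar>" M "2 * \<bar>h\<bar>"] by (simp add: abs_mult algebra_simps)
  then have "2 * \<bar>m * h\<bar> \<le> q"
    by (simp only: of_int_le_iff)
  then have dist: "1 / (2 * real_of_int q) \<le> \<bar>g - of_int (round g)\<bar>"
    unfolding g_def using assms m by (intro dist_round_mult_ge) auto
  moreover have "0 < 1 / (2 * real_of_int q)" using q by simp
  ultimately have dist_pos: "0 < \<bar>g - of_int (round g)\<bar>" by linarith
  then have "norm (exp_sum (\<lambda>t. g * t + c) N) \<le> 1 / \<bar>g - of_int (round g)\<bar>"
    by (intro norm_exp_sum_linear_le) auto
  also have "\<dots> \<le> 2 * real_of_int q"
    using dist dist_pos q by (simp add: field_simps)
  finally show "norm (exp_sum (\<lambda>t. real_of_int m * (real_of_int h * \<alpha>) * t + c) N) \<le> 2 * real_of_int q"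
    by (simp add: g_def mult.assoc)
qed

lemma coeff_pcompose_shift:
  fixes P :: "'a::comm_semiring_1 poly"
  assumes "degree P \<le> n"
  shows "coeff (P \<circ>\<^sub>p [:a, 1:]) i = (\<Sum>l\<le>n. coeff P l * of_nat (l choose i) * a ^ (l - i))"
proof -
  have power: "coeff ([:a, 1:] ^ l) i = of_nat (l choose i) * a ^ (l - i)" for l
  proof (cases "i \<le> l")
    case False
    then show ?thesis using degree_linear_power[of a l] by (simp add: coeff_eq_0 binomial_eq_0)
  qed (simp add: coeff_linear_poly_power)
  have "P \<circ>\<^sub>p [:a, 1:] = (\<Sum>l\<le>n. [:coeff P l:] * [:a, 1:] ^ l)"
    unfolding pcompose_altdef poly_altdef
    by (rule sum.mono_neutral_cong_left) (auto simp: degree_map_poly coeff_map_poly coeff_eq_0 assms)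
  then show ?thesis by (simp add: coeff_sum power mult.assoc)
qed

lemma weyl_difference:
  fixes P :: "'a::comm_ring_1 poly" and a b :: 'a
  assumes deg: "degree P \<le> Suc j"
  defines "D \<equiv> P \<circ>\<^sub>p [:a, 1:] - P \<circ>\<^sub>p [:b, 1:]"
  shows "degree D \<le> j" and "coeff D j = of_nat (Suc j) * coeff P (Suc j) * (a - b)"
proof -
  have coeff_D: "coeff D i = (\<Sum>l\<le>Suc j. coeff P l * of_nat (l choose i) * (a ^ (l - i) - b ^ (l - i)))" for i
    unfolding D_def coeff_diff coeff_pcompose_shift[OF deg]
    by (simp add: sum_subtractf right_diff_distrib)
  have "coeff D i = 0" if "j < i" for i
    unfolding coeff_D using that by (intro sum.neutral) (auto simp: binomial_eq_0)
  then show "degree D \<le> j" by (simp add: degree_le)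
  show "coeff D j = of_nat (Suc j) * coeff P (Suc j) * (a - b)"
    unfolding coeff_D by (simp add: binomial_eq_0 le_Suc_eq)
qed

(* The range of the multipliers of the leading coefficient after differencing from
   degree j down to degree 1 with shifts below R^(1/2^(i-2)) at degree i; the
   exponent is 1 + 1/2 + ... + 1/2^(j-2). *)
definition weyl_height :: "nat \<Rightarrow> real \<Rightarrow> real" where
  "weyl_height j R = fact j * R powr (2 - 1 / 2 powr (real j - 2))"

lemma weyl_height_1: "0 < R \<Longrightarrow> weyl_height 1 R = 1"
  by (simp add: weyl_height_def powr_minus)

lemma weyl_height_Suc:
  assumes "1 \<le> j"
  shows "real (Suc j) * R powr (1 / 2 ^ (j - 1)) * weyl_height j R = weyl_height (Suc j) R"
proof -
  define t :: real where "t = 2 ^ (j - 1)"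
  have "2 powr (real j - 2) = t / 2" "2 powr (real (Suc j) - 2) = t"
    using assms by (simp_all add: t_def powr_diff flip: powr_realpow)
  moreover have "0 < t" by (simp add: t_def)
  ultimately have "1 / t + (2 - 1 / 2 powr (real j - 2)) = 2 - 1 / 2 powr (real (Suc j) - 2)"
    by (simp add: field_simps)
  then have "R powr (1 / t) * R powr (2 - 1 / 2 powr (real j - 2)) = R powr (2 - 1 / 2 powr (real (Suc j) - 2))"
    by (metis powr_add)
  then show ?thesis
    unfolding weyl_height_def t_def by (simp add: ac_simps)
qed

lemma le_weyl_height:
  assumes "2 \<le> k" "1 \<le> R"
  shows "R \<le> weyl_height k R"
proof -
  have "1 \<le> (2::real) powr (real k - 2)" using assms by (intro ge_one_powr_ge_zero) auto
  then have "R powr 1 \<le> R powr (2 - 1 / 2 powr (real k - 2))"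
    using assms by (intro powr_mono) (auto simp: field_simps)
  also have "\<dots> \<le> fact k * R powr (2 - 1 / 2 powr (real k - 2))"
    using mult_right_mono[of 1 "fact k" "R powr (2 - 1 / 2 powr (real k - 2))"] by simp
  finally show ?thesis
    using assms by (simp add: weyl_height_def)
qed

lemma floor_powr_bounds:
  fixes R \<epsilon> :: real
  assumes "1 \<le> R" "0 \<le> \<epsilon>"
  shows "1 \<le> nat \<lfloor>R powr \<epsilon>\<rfloor>" "nat \<lfloor>R powr \<epsilon>\<rfloor> \<le> R powr \<epsilon>" "R powr \<epsilon> \<le> 2 * real (nat \<lfloor>R powr \<epsilon>\<rfloor>)"
proof -
  have "1 \<le> R powr \<epsilon>" using assms by (intro ge_one_powr_ge_zero)
  then have "1 \<le> real (nat \<lfloor>R powr \<epsilon>\<rfloor>)" "real (nat \<lfloor>R powr \<epsilon>\<rfloor>) = of_int \<lfloor>R powr \<epsilon>\<rfloor>"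
    by simp_all
  then show "1 \<le> nat \<lfloor>R powr \<epsilon>\<rfloor>" "nat \<lfloor>R powr \<epsilon>\<rfloor> \<le> R powr \<epsilon>" "R powr \<epsilon> \<le> 2 * real (nat \<lfloor>R powr \<epsilon>\<rfloor>)"
    using real_of_int_floor_add_one_gt[of "R powr \<epsilon>"] by linarith+
qed

lemma linear_exp_sums_le_weyl_difference:
  fixes P :: "real poly" and a b H :: nat
  assumes sums: "linear_exp_sums_le N Q (coeff P (Suc j)) (weyl_height (Suc j) R)"
    and deg: "degree P \<le> Suc j" and j: "1 \<le> j" and ab: "a < H" "b < H" "a \<noteq> b"
    and H: "real H \<le> R powr (1 / 2 ^ (j - 1))"
  shows "linear_exp_sums_le N Q (coeff (P \<circ>\<^sub>p [:real a, 1:] - P \<circ>\<^sub>p [:real b, 1:]) j) (weyl_height j R)"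
proof -
  define c where "c = int (Suc j) * (int a - int b)"
  have "\<bar>real_of_int c\<bar> \<le> real (Suc j) * R powr (1 / 2 ^ (j - 1))"
  proof -
    have "\<bar>real_of_int c\<bar> = real (Suc j) * \<bar>real a - real b\<bar>"
      by (simp add: c_def abs_mult)
    also have "\<dots> \<le> real (Suc j) * R powr (1 / 2 ^ (j - 1))"
      using ab H by (intro mult_left_mono) auto
    finally show ?thesis .
  qed
  then have "\<bar>real_of_int c\<bar> * weyl_height j R \<le> real (Suc j) * R powr (1 / 2 ^ (j - 1)) * weyl_height j R"
    by (rule mult_right_mono) (simp add: weyl_height_def)
  then have "\<bar>real_of_int c\<bar> * weyl_height j R \<le> weyl_height (Suc j) R"
    by (simp only: weyl_height_Suc[OF j])
  moreover have "c \<noteq> 0" using ab by (simp add: c_def)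
  ultimately have "linear_exp_sums_le N Q (real_of_int c * coeff P (Suc j)) (weyl_height j R)"
    by (intro linear_exp_sums_le_scale[OF sums])
  moreover have "coeff (P \<circ>\<^sub>p [:real a, 1:] - P \<circ>\<^sub>p [:real b, 1:]) j = real_of_int c * coeff P (Suc j)"
    using weyl_difference(2)[OF deg, of "real a" "real b"] by (simp add: c_def)
  ultimately show ?thesis by simp
qed

(* weyl_const j is the constant for polynomials of degree j + 1. *)
primrec weyl_const :: "nat \<Rightarrow> real" where
  "weyl_const 0 = 2"
| "weyl_const (Suc j) = 2 + sqrt (2 + weyl_const j)"

lemma weyl_const_ge_2: "2 \<le> weyl_const j"
  by (induction j) auto

lemma exp_sum_poly_le_weyl_const:
  fixes P :: "real poly" and N :: nat and R x Q :: real
  assumes R: "1 \<le> R" and x: "1 / R \<le> x" "x \<le> 1" and Q: "Q \<le> 2 * x * N"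
  shows "1 \<le> j \<Longrightarrow> j = 1 \<or> R \<le> x * N \<Longrightarrow> degree P \<le> j \<Longrightarrow>
    linear_exp_sums_le N Q (coeff P j) (weyl_height j R) \<Longrightarrow>
    norm (exp_sum (poly P) N) \<le> weyl_const (j - 1) * x powr (1 / 2 ^ (j - 1)) * N"
proof (induction j arbitrary: P rule: nat_induct_at_least)
  case base
  have x0: "0 < x" using R x(1) order_less_le_trans[of 0 "1 / R" x] by simp
  have "P = [:coeff P 0, coeff P 1:]"
    using base.prems(2) by (intro poly_eqI) (auto simp: coeff_pCons coeff_eq_0 split: nat.split)
  then have "exp_sum (poly P) N = exp_sum (\<lambda>t. real_of_int 1 * coeff P 1 * t + coeff P 0) N"
    by (metis (no_types) add.commute mult.commute mult_1 of_int_1 poly_pCons mult_zero_right poly_0 add_0)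
  also have "norm \<dots> \<le> Q"
    using base.prems(3) weyl_height_1[of R] R unfolding linear_exp_sums_le_def by (auto dest!: spec[of _ "1::int"])
  finally show ?case using Q x0 by simp
next
  case (Suc j)
  define \<epsilon> :: real where "\<epsilon> = 1 / 2 ^ (j - 1)"
  define H where "H = nat \<lfloor>R powr \<epsilon>\<rfloor>"
  define B where "B = weyl_const (j - 1) * x powr \<epsilon>"
  have x0: "0 < x" using R x(1) order_less_le_trans[of 0 "1 / R" x] by simp
  have RN: "R \<le> x * N" using Suc.prems(1) Suc.hyps by auto
  have H: "1 \<le> H" "real H \<le> R powr \<epsilon>" "R powr \<epsilon> \<le> 2 * real H"
    using floor_powr_bounds[OF R, of \<epsilon>] by (simp_all add: H_def \<epsilon>_def)
  have "norm (exp_sum (poly P) N) \<le> 2 * real H + sqrt (1 / H + B) * N"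
  proof (rule weyl_differencing)
    show "1 \<le> H" by (fact H(1))
    show "0 \<le> B" using weyl_const_ge_2[of "j - 1"] by (simp add: B_def)
    fix a b assume ab: "a < H" "b < H" "a \<noteq> b"
    define D where "D = P \<circ>\<^sub>p [:real a, 1:] - P \<circ>\<^sub>p [:real b, 1:]"
    have "degree D \<le> j"
      unfolding D_def using weyl_difference(1) Suc.prems(2) by blast
    moreover have "linear_exp_sums_le N Q (coeff D j) (weyl_height j R)"
      unfolding D_def using linear_exp_sums_le_weyl_difference Suc.prems Suc.hyps ab H(2)
      by (simp add: \<epsilon>_def)
    ultimately have "norm (exp_sum (poly D) N) \<le> B * N"
      using Suc.IH[of D] RN by (simp add: B_def \<epsilon>_def)
    moreover have "poly D = (\<lambda>t. poly P (t + real a) - poly P (t + real b))"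
      by (simp add: D_def poly_pcompose fun_eq_iff add.commute)
    ultimately show "norm (exp_sum (\<lambda>t. poly P (t + real a) - poly P (t + real b)) N) \<le> B * N"
      by simp
  qed
  moreover have "2 * real H \<le> 2 * x powr (1 / 2 ^ j) * N"
  proof -
    have "real H \<le> R"
      using H(2) R powr_mono[of \<epsilon> 1 R] by (simp add: \<epsilon>_def)
    moreover have "x \<le> x powr (1 / 2 ^ j)"
      using powr_mono'[of "1 / 2 ^ j" 1 x] x x0 by simp
    ultimately show ?thesis
      using RN mult_right_mono[of x "x powr (1 / 2 ^ j)" N] by simp
  qed
  moreover have "sqrt (1 / H + B) * N \<le> sqrt (2 + weyl_const (j - 1)) * x powr (1 / 2 ^ j) * N"
  proof -
    have "1 / H \<le> 2 * (1 / R) powr \<epsilon>"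
      using H R by (simp add: powr_divide field_simps)
    also have "\<dots> \<le> 2 * x powr \<epsilon>"
      using x R by (intro mult_left_mono powr_mono2) (auto simp: \<epsilon>_def)
    finally have "1 / H + B \<le> (2 + weyl_const (j - 1)) * x powr \<epsilon>"
      by (simp add: B_def algebra_simps)
    then have "sqrt (1 / H + B) \<le> sqrt (2 + weyl_const (j - 1)) * sqrt (x powr \<epsilon>)"
      by (metis real_sqrt_le_mono real_sqrt_mult)
    also have "sqrt (x powr \<epsilon>) = x powr (1 / 2 ^ j)"
    proof -
      have "1 / 2 ^ j = \<epsilon> / (2::real)" using Suc.hyps by (cases j) (simp_all add: \<epsilon>_def)
      then show ?thesis using powr_half_sqrt_powr[of x \<epsilon>] x0 by (simp only: less_imp_le)
    qed
    finally show ?thesis by (intro mult_right_mono) simp_all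
  qed
  ultimately show ?case
    using Suc.hyps by (cases j) (simp_all add: algebra_simps)
qed

lemma weyl_inequality:
  fixes P :: "real poly" and N :: nat and R x Q :: real
  assumes "1 \<le> k" "degree P \<le> k" "1 \<le> R" "1 / R \<le> x" "Q \<le> 2 * x * N" "k = 1 \<or> R \<le> x * N"
    and "linear_exp_sums_le N Q (coeff P k) (weyl_height k R)"
  shows "norm (exp_sum (poly P) N) \<le> weyl_const (k - 1) * x powr (1 / 2 ^ (k - 1)) * N"
proof (cases "x \<le> 1")
  case True
  then show ?thesis using exp_sum_poly_le_weyl_const assms by blast
next
  case False
  then have "1 * 1 \<le> weyl_const (k - 1) * x powr (1 / 2 ^ (k - 1))"
    using weyl_const_ge_2[of "k - 1"] ge_one_powr_ge_zero[of x "1 / 2 ^ (k - 1)"]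
    by (intro mult_mono) auto
  then have "real N \<le> weyl_const (k - 1) * x powr (1 / 2 ^ (k - 1)) * N"
    using mult_right_mono[of 1 _ "real N"] by fastforce
  then show ?thesis
    using norm_exp_sum_le[of "poly P" N] by linarith
qed

lemma sum_atLeastAtMost_int_eq_exp_sum:
  fixes N :: int
  assumes "0 \<le> N"
  shows "(\<Sum>n\<in>{1..N}. e (f (real_of_int n))) = exp_sum f (nat N)"
proof -
  have "{1..N} = int ` {1..nat N}" using assms by (simp add: image_int_atLeastAtMost)
  then show ?thesis by (simp add: exp_sum_def sum.reindex)
qed

lemma weyl_inequality_rational_approx:
  fixes P :: "real poly" and p q h :: int and N :: nat and R :: real
  assumes k: "1 \<le> k" and deg: "degree P = k" and q: "q > 0" and "coprime p q"
    and approx: "\<bar>coeff P k - real_of_int p / real_of_int q\<bar> \<le> 1 / (real_of_int q)\<^sup>2"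
    and h: "h > 0" and R: "1 \<le> R" "R \<le> N" and height: "2 * real_of_int h * weyl_height k R \<le> real_of_int q"
  defines "x \<equiv> 1 / R + real_of_int q / N"
  shows "norm (exp_sum (\<lambda>t. real_of_int h * poly P t) N) \<le> weyl_const (k - 1) * x powr (1 / 2 ^ (k - 1)) * N"
proof -
  have "R \<le> q" if "2 \<le> k"
  proof -
    have "R \<le> weyl_height k R" using le_weyl_height[OF that R(1)] .
    also have "\<dots> \<le> 2 * real_of_int h * weyl_height k R"
      using h mult_right_mono[of 1 "2 * real_of_int h" "weyl_height k R"] by (simp add: weyl_height_def)
    finally show ?thesis using height by simp
  qed
  moreover have q_le: "real_of_int q \<le> x * N" using R by (simp add: x_def field_simps)
  ultimately have "k = 1 \<or> R \<le> x * N" using k by force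
  moreover have "linear_exp_sums_le N (2 * real_of_int q) (coeff (smult (of_int h) P) k) (weyl_height k R)"
    using linear_exp_sums_le_approx[of q p "coeff P k" h "weyl_height k R"] assms
    by (simp add: mult.assoc)
  moreover have "1 / R \<le> x" using R q by (simp add: x_def)
  ultimately have "norm (exp_sum (poly (smult (of_int h) P)) N) \<le> weyl_const (k - 1) * x powr (1 / 2 ^ (k - 1)) * N"
    using k R deg q_le degree_smult_le[of "of_int h" P] by (intro weyl_inequality) auto
  moreover have "poly (smult (of_int h) P) = (\<lambda>t. real_of_int h * poly P t)"
    by (simp add: fun_eq_iff)
  ultimately show ?thesis by simp
qed

theorem proposition1:
  fixes k :: nat
  assumes "k \<ge> 1"
  shows "\<exists>C::real. \<forall>(P::real poly) (q::int) (R::int) (h::int) (p::int) (N::int).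
           degree P = k \<longrightarrow> q > 0 \<longrightarrow> R > 0 \<longrightarrow> h > 0 \<longrightarrow>
           gcd p q = 1 \<longrightarrow>
           \<bar>coeff P k - real_of_int p / real_of_int q\<bar> \<le> 1 / (real_of_int q)^2 \<longrightarrow>
           2 * real_of_int h * fact k * (real_of_int R) powr (2 - 1 / 2 powr (real k - 2)) \<le> real_of_int q \<longrightarrow>
           N \<ge> R \<longrightarrow>
           (1 / real_of_int N) * norm (\<Sum>n\<in>{1..N}. e (real_of_int h * poly P (real_of_int n)))
             \<le> C * (1 / real_of_int R + real_of_int q / real_of_int N) powr (1 / 2 ^ (k - 1))"
proof (intro exI[of _ "weyl_const (k - 1)"] allI impI)
  fix P :: "real poly" and q R h p N :: int
  assume "degree P = k" "q > 0" "R > 0" "h > 0" "gcd p q = 1"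
    "\<bar>coeff P k - real_of_int p / real_of_int q\<bar> \<le> 1 / (real_of_int q)^2"
    "2 * real_of_int h * fact k * (real_of_int R) powr (2 - 1 / 2 powr (real k - 2)) \<le> real_of_int q"
    "N \<ge> R"
  moreover have "real (nat N) = real_of_int N" "0 < N" using \<open>N \<ge> R\<close> \<open>R > 0\<close> by auto
  ultimately have "norm (exp_sum (\<lambda>t. real_of_int h * poly P t) (nat N)) \<le>
      weyl_const (k - 1) * (1 / real_of_int R + real_of_int q / real_of_int N) powr (1 / 2 ^ (k - 1)) * real_of_int N"
    using weyl_inequality_rational_approx[of k P q p h "real_of_int R" "nat N"] assms
    by (simp add: weyl_height_def coprime_iff_gcd_eq_1 mult.assoc)
  then show "(1 / real_of_int N) * norm (\<Sum>n\<in>{1..N}. e (real_of_int h * poly P (real_of_int n)))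
      \<le> weyl_const (k - 1) * (1 / real_of_int R + real_of_int q / real_of_int N) powr (1 / 2 ^ (k - 1))"
    using \<open>0 < N\<close> by (simp add: sum_atLeastAtMost_int_eq_exp_sum[where f = "\<lambda>t. real_of_int h * poly P t"] field_simps)
qed

end
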